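(* Let $A=(A,\wedge,\vee,\cdot,\to,1)$ be a $\mathsf{DLCMI}$ and $f:A\to A$ a function. The following are equivalent: 1. $f$ is compatible. 2. There exists a function $g:A\times A\to A$ satisfying condition (M), compatible in the first variable, and such that for every $a\in A$, $f(a)=\min\{b\in A: g(a,b)\le b\}$. 3. There exists a function $\hat g:A\times A\to A$ satisfying condition (M), compatible in the first variable, and such that for all $a,b\in A$: (i) $\hat g(a,f(a))\le f(a)$ and (ii) $f(a)\le \hat g(a,b)\vee b$.
   Context: An algebra $(A,\wedge,\vee,\cdot,\to,1)$ of type $(2,2,2,2,0)$ is a $\mathsf{DLCMI}$ if for all $a,b,c\in A$: (1) $(A,\wedge,\vee)$ is a distributive lattice; (2) $1$ is its largest element; (3) $(A,\cdot,1)$ is a commutative monoid; (4) $(a\to b)\wedge(a\to c)=a\to(b\wedge c)$; (5) $(a\to c)\wedge(b\to c)=(a\vee b)\to c$; (6) $a\to a=1$; (7) $(a\vee b)\cdot c=(a\cdot c)\vee(b\cdot c)$; (8) $(a\to b)\cdot(b\to c)\le a\to c$; (9) $a\to b\le (a\cdot c)\to(b\cdot c)$. A unary function $h:A\to A$ is compatible if for every congruence $\theta$ of $A$, $(a,b)\in\theta$ implies $(h(a),h(b))\in\theta$. A function $g:A\times A\to A$ satisfies condition (M) if for all $a,b,c\in A$, $c\ge b$ implies $g(a,c)\le g(a,b)$. $g$ is compatible in the first variable if for every $c\in A$ the unary function $x\mapsto g(x,c)$ is compatible. *)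

theory Defs
  imports Main
begin

text \<open>A DLCMI on a type 'a: the lattice reduct is the type-class distributive lattice
  (inf = meet, sup = join, order = lattice order), 1 = top is its largest element,
  and the parameters m (product) and i (implication) are the remaining operations.\<close>

definition DLCMI :: "('a::{distrib_lattice,order_top} \<Rightarrow> 'a \<Rightarrow> 'a) \<Rightarrow> ('a \<Rightarrow> 'a \<Rightarrow> 'a) \<Rightarrow> bool" where
  "DLCMI m i \<longleftrightarrow>
     (\<forall>a b c. m (m a b) c = m a (m b c)) \<and>
     (\<forall>a b. m a b = m b a) \<and>
     (\<forall>a. m a top = a) \<and>
     (\<forall>a b c. inf (i a b) (i a c) = i a (inf b c)) \<and>
     (\<forall>a b c. inf (i a c) (i b c) = i (sup a b) c) \<and>
     (\<forall>a. i a a = top) \<and>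
     (\<forall>a b c. m (sup a b) c = sup (m a c) (m b c)) \<and>
     (\<forall>a b c. m (i a b) (i b c) \<le> i a c) \<and>
     (\<forall>a b c. i a b \<le> i (m a c) (m b c))"

definition congruence :: "('a::{distrib_lattice,order_top} \<Rightarrow> 'a \<Rightarrow> 'a) \<Rightarrow> ('a \<Rightarrow> 'a \<Rightarrow> 'a) \<Rightarrow> ('a \<times> 'a) set \<Rightarrow> bool" where
  "congruence m i \<theta> \<longleftrightarrow> equiv UNIV \<theta> \<and>
     (\<forall>a b c d. (a, b) \<in> \<theta> \<longrightarrow> (c, d) \<in> \<theta> \<longrightarrow>
        (inf a c, inf b d) \<in> \<theta> \<and> (sup a c, sup b d) \<in> \<theta> \<and>
        (m a c, m b d) \<in> \<theta> \<and> (i a c, i b d) \<in> \<theta>)"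

definition compatible :: "('a::{distrib_lattice,order_top} \<Rightarrow> 'a \<Rightarrow> 'a) \<Rightarrow> ('a \<Rightarrow> 'a \<Rightarrow> 'a) \<Rightarrow> ('a \<Rightarrow> 'a) \<Rightarrow> bool" where
  "compatible m i h \<longleftrightarrow> (\<forall>\<theta>. congruence m i \<theta> \<longrightarrow> (\<forall>a b. (a, b) \<in> \<theta> \<longrightarrow> (h a, h b) \<in> \<theta>))"

definition condM :: "('a::order \<Rightarrow> 'a \<Rightarrow> 'a) \<Rightarrow> bool" where
  "condM g \<longleftrightarrow> (\<forall>a b c. b \<le> c \<longrightarrow> g a c \<le> g a b)"

definition compatible_first :: "('a::{distrib_lattice,order_top} \<Rightarrow> 'a \<Rightarrow> 'a) \<Rightarrow> ('a \<Rightarrow> 'a \<Rightarrow> 'a) \<Rightarrow> ('a \<Rightarrow> 'a \<Rightarrow> 'a) \<Rightarrow> bool" where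
  "compatible_first m i g \<longleftrightarrow> (\<forall>c. compatible m i (\<lambda>x. g x c))"

end

theory Submission
  imports Defs
begin

text \<open>Only the lattice part of the structure matters. If \<open>\<theta>\<close> identifies \<open>x\<close> and \<open>y\<close>,
  then \<open>c = f x \<squnion> g y (f x)\<close> is \<open>\<theta>\<close>-related to \<open>f x \<squnion> g x (f x) = f x\<close>, and condition (M)
  gives \<open>g y c \<le> g y (f x) \<le> c\<close>, so \<open>f y \<le> c\<close> by minimality. Thus \<open>f y\<close> lies below an element
  of the class of \<open>f x\<close> and vice versa, and meeting with \<open>f y\<close> resp. \<open>f x\<close> puts both into the
  class of \<open>f x \<sqinter> f y\<close>. Conversely, a compatible \<open>f\<close> is represented by \<open>g a b = f a\<close>.\<close>

context
  fixes m i :: "'a::{distrib_lattice,order_top} \<Rightarrow> 'a \<Rightarrow> 'a" and \<theta> :: "('a \<times> 'a) set"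
  assumes cong: "congruence m i \<theta>"
begin

lemma congruence_refl: "(x, x) \<in> \<theta>"
  using cong unfolding congruence_def by (simp add: equiv_def refl_on_def)

lemma congruence_sym: "(x, y) \<in> \<theta> \<Longrightarrow> (y, x) \<in> \<theta>"
  using cong unfolding congruence_def by (meson equiv_def symD)

lemma congruence_trans: "(x, y) \<in> \<theta> \<Longrightarrow> (y, z) \<in> \<theta> \<Longrightarrow> (x, z) \<in> \<theta>"
  using cong unfolding congruence_def by (meson equiv_def transD)

lemma congruence_sup_left: "(x, y) \<in> \<theta> \<Longrightarrow> (sup z x, sup z y) \<in> \<theta>"
  using cong congruence_refl unfolding congruence_def by blast

lemma congruence_inf_left: "(x, y) \<in> \<theta> \<Longrightarrow> (inf z x, inf z y) \<in> \<theta>"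
  using cong congruence_refl unfolding congruence_def by blast

lemma congruence_if_below_related:
  assumes "u \<le> c" "(c, v) \<in> \<theta>" and "v \<le> d" "(d, u) \<in> \<theta>"
  shows "(u, v) \<in> \<theta>"
proof -
  have "(inf u c, inf u v) \<in> \<theta>"
    using \<open>(c, v) \<in> \<theta>\<close> by (rule congruence_inf_left)
  then have "(u, inf u v) \<in> \<theta>"
    using \<open>u \<le> c\<close> by (simp add: inf.absorb1)
  moreover have "(inf v d, inf v u) \<in> \<theta>"
    using \<open>(d, u) \<in> \<theta>\<close> by (rule congruence_inf_left)
  then have "(v, inf u v) \<in> \<theta>"
    using \<open>v \<le> d\<close> by (simp add: inf.absorb1 inf_commute[of v u])
  ultimately show ?thesis
    by (blast intro: congruence_sym congruence_trans)
qed

lemma least_prefixed_below_related: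
  assumes M: "condM g" and C: "compatible_first m i g"
    and prefixed: "\<And>a. g a (f a) \<le> f a" and least: "\<And>a b. g a b \<le> b \<Longrightarrow> f a \<le> b"
    and xy: "(x, y) \<in> \<theta>"
  obtains c where "f y \<le> c" "(c, f x) \<in> \<theta>"
proof
  define c where "c = sup (f x) (g y (f x))"
  have "(g x (f x), g y (f x)) \<in> \<theta>"
    using C cong xy unfolding compatible_first_def compatible_def by blast
  then have "(sup (f x) (g x (f x)), c) \<in> \<theta>"
    unfolding c_def by (rule congruence_sup_left)
  then show "(c, f x) \<in> \<theta>"
    using prefixed by (simp add: sup.absorb1 congruence_sym)
  have "g y c \<le> g y (f x)"
    using M unfolding condM_def c_def by simp
  then show "f y \<le> c"
    using least unfolding c_def by (meson le_supI2)
qed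

end

lemma compatible_if_least_prefixed:
  fixes m i :: "'a::{distrib_lattice,order_top} \<Rightarrow> 'a \<Rightarrow> 'a"
  assumes M: "condM g" and C: "compatible_first m i g"
    and prefixed: "\<And>a. g a (f a) \<le> f a" and least: "\<And>a b. g a b \<le> b \<Longrightarrow> f a \<le> b"
  shows "compatible m i f"
  unfolding compatible_def
proof (intro allI impI)
  fix \<theta> x y
  assume cong: "congruence m i \<theta>" and xy: "(x, y) \<in> \<theta>"
  obtain c where "f y \<le> c" "(c, f x) \<in> \<theta>"
    using least_prefixed_below_related[OF cong M C prefixed least xy] .
  moreover obtain d where "f x \<le> d" "(d, f y) \<in> \<theta>"
    using least_prefixed_below_related[OF cong M C prefixed least congruence_sym[OF cong xy]] .
  ultimately show "(f x, f y) \<in> \<theta>"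
    using congruence_if_below_related[OF cong] by blast
qed

lemma condM_const_second: "condM (\<lambda>a b. f a)"
  unfolding condM_def by simp

lemma compatible_first_const_second:
  "compatible m i f \<Longrightarrow> compatible_first m i (\<lambda>a b. f a)"
  unfolding compatible_first_def by simp

theorem proposition4p8:
  fixes m i :: "'a::{distrib_lattice,order_top} \<Rightarrow> 'a \<Rightarrow> 'a" and f :: "'a \<Rightarrow> 'a"
  assumes "DLCMI m i"
  shows "(compatible m i f
           \<longleftrightarrow> (\<exists>g. condM g \<and> compatible_first m i g \<and>
                   (\<forall>a. g a (f a) \<le> f a \<and> (\<forall>b. g a b \<le> b \<longrightarrow> f a \<le> b))))
       \<and> (compatible m i f
           \<longleftrightarrow> (\<exists>g. condM g \<and> compatible_first m i g \<and>
                   (\<forall>a b. g a (f a) \<le> f a \<and> f a \<le> sup (g a b) b)))"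
proof (intro conjI iffI)
  assume "compatible m i f"
  then have "condM (\<lambda>a b. f a) \<and> compatible_first m i (\<lambda>a b. f a)"
    by (simp add: condM_const_second compatible_first_const_second)
  then show "\<exists>g. condM g \<and> compatible_first m i g \<and>
          (\<forall>a. g a (f a) \<le> f a \<and> (\<forall>b. g a b \<le> b \<longrightarrow> f a \<le> b))"
    and "\<exists>g. condM g \<and> compatible_first m i g \<and>
          (\<forall>a b. g a (f a) \<le> f a \<and> f a \<le> sup (g a b) b)"
    by (auto intro!: exI[of _ "\<lambda>a b. f a"])
next
  assume "\<exists>g. condM g \<and> compatible_first m i g \<and>
            (\<forall>a. g a (f a) \<le> f a \<and> (\<forall>b. g a b \<le> b \<longrightarrow> f a \<le> b))"
  then show "compatible m i f"
    using compatible_if_least_prefixed by metis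
next
  assume "\<exists>g. condM g \<and> compatible_first m i g \<and>
            (\<forall>a b. g a (f a) \<le> f a \<and> f a \<le> sup (g a b) b)"
  then obtain g where g: "condM g" "compatible_first m i g" "\<And>a. g a (f a) \<le> f a"
    and bounded: "\<And>a b. f a \<le> sup (g a b) b" by blast
  have "\<And>a b. g a b \<le> b \<Longrightarrow> f a \<le> b"
    using bounded by (metis sup.absorb2)
  then show "compatible m i f"
    by (rule compatible_if_least_prefixed[OF g])
qed

end
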